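(* Let $p\ge5$, $1\le a\le p-4$, $s_\varepsilon\in\{0,\dots,p-2\}$, and let $k=k_\bullet(p-1)+k_\varepsilon$ with $k_\bullet\ge1$. Then $\mathrm M(k)\le\lfloor\log_p k_\bullet\rfloor+3$.
   Context: $v_p(p)=1$. $\{m\}\in\{0,\dots,p-2\}$ is the residue of $m$ mod $p-1$. $k_\varepsilon=2+\{a+2s_\varepsilon\}$, $\delta_\varepsilon=\lfloor(s_\varepsilon+\{a+s_\varepsilon\})/(p-1)\rfloor$; if $a+s_\varepsilon<p-1$, $t_1=s_\varepsilon+\delta_\varepsilon$, $t_2=a+s_\varepsilon+\delta_\varepsilon+2$; else $t_1=\{a+s_\varepsilon\}+\delta_\varepsilon+1$, $t_2=a+s_\varepsilon+\delta_\varepsilon+1$. For $k\ge2$, $k=k_\bullet(p-1)+k_\varepsilon$: $d_k^{\mathrm{Iw}}=2k_\bullet+2-2\delta_\varepsilon$; $d_k^{\mathrm{ur}}=2\lfloor(k_\bullet-t_1)/(p+1)\rfloor+1+\eta_k$ ($\eta_k=1$ if $k_\bullet-(p+1)\lfloor(k_\bullet-t_1)/(p+1)\rfloor\ge t_2$, else $0$). $w_k=\exp(p(k-2))-1$ (so $v_p(w_k-w_{k'})=1+v_p(k-k')$). For $n\ge1$, $m_n(k)=\min\{n-d_k^{\mathrm{ur}},d_k^{\mathrm{Iw}}-d_k^{\mathrm{ur}}-n\}$ if $d_k^{\mathrm{ur}}<n<d_k^{\mathrm{Iw}}-d_k^{\mathrm{ur}}$, else $0$. $\mathrm M(k)=\max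 v_p(w_{k'}-w_k)$ over all $k'\ne k$, $k'\ge2$, $k'\equiv k_\varepsilon\pmod{p-1}$, such that $m_n(k')\ne0$ for some $1\le n\le d_k^{\mathrm{Iw}}$. *)

theory Defs
  imports Complex_Main "HOL-Computational_Algebra.Primes" "HOL-Library.Extended_Nat"
begin

definition resid :: "nat \<Rightarrow> nat \<Rightarrow> nat" where
  "resid p m = m mod (p - 1)"

definition keps :: "nat \<Rightarrow> nat \<Rightarrow> nat \<Rightarrow> nat" where
  "keps p a s = 2 + resid p (a + 2 * s)"

definition deltaeps :: "nat \<Rightarrow> nat \<Rightarrow> nat \<Rightarrow> nat" where
  "deltaeps p a s = (s + resid p (a + s)) div (p - 1)"

definition t1 :: "nat \<Rightarrow> nat \<Rightarrow> nat \<Rightarrow> nat" where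
  "t1 p a s = (if a + s < p - 1 then s + deltaeps p a s
               else resid p (a + s) + deltaeps p a s + 1)"

definition t2 :: "nat \<Rightarrow> nat \<Rightarrow> nat \<Rightarrow> nat" where
  "t2 p a s = (if a + s < p - 1 then a + s + deltaeps p a s + 2
               else a + s + deltaeps p a s + 1)"

definition kbul :: "nat \<Rightarrow> nat \<Rightarrow> nat \<Rightarrow> nat \<Rightarrow> nat" where
  "kbul p a s k = (k - keps p a s) div (p - 1)"

definition dIw :: "nat \<Rightarrow> nat \<Rightarrow> nat \<Rightarrow> nat \<Rightarrow> int" where
  "dIw p a s k = 2 * int (kbul p a s k) + 2 - 2 * int (deltaeps p a s)"

definition qur :: "nat \<Rightarrow> nat \<Rightarrow> nat \<Rightarrow> nat \<Rightarrow> int" where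
  "qur p a s k = \<lfloor>(real (kbul p a s k) - real (t1 p a s)) / real (p + 1)\<rfloor>"

definition eta :: "nat \<Rightarrow> nat \<Rightarrow> nat \<Rightarrow> nat \<Rightarrow> int" where
  "eta p a s k = (if int (kbul p a s k) - int (p + 1) * qur p a s k \<ge> int (t2 p a s) then 1 else 0)"

definition dur :: "nat \<Rightarrow> nat \<Rightarrow> nat \<Rightarrow> nat \<Rightarrow> int" where
  "dur p a s k = 2 * qur p a s k + 1 + eta p a s k"

definition mn :: "nat \<Rightarrow> nat \<Rightarrow> nat \<Rightarrow> int \<Rightarrow> nat \<Rightarrow> int" where
  "mn p a s n k = (if dur p a s k < n \<and> n < dIw p a s k - dur p a s k
                   then min (n - dur p a s k) (dIw p a s k - dur p a s k - n) else 0)"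

text \<open>v_p(w_k - w_k') = 1 + v_p(k - k') for k \<noteq> k' (w_k = exp(p(k-2)) - 1).\<close>
definition vw :: "nat \<Rightarrow> nat \<Rightarrow> nat \<Rightarrow> nat" where
  "vw p k k' = 1 + multiplicity (int p) (int k' - int k)"

text \<open>M(k) as a supremum in extended naturals (empty set gives 0).\<close>
definition MM :: "nat \<Rightarrow> nat \<Rightarrow> nat \<Rightarrow> nat \<Rightarrow> enat" where
  "MM p a s k = Sup {enat (vw p k k') | k'. k' \<noteq> k \<and> k' \<ge> 2 \<and>
       k' mod (p - 1) = keps p a s mod (p - 1) \<and>
       (\<exists>n::int. 1 \<le> n \<and> n \<le> dIw p a s k \<and> mn p a s n k' \<noteq> 0)}"

end

theory Submission
  imports Defs
begin

text \<open>A weight k' can contribute to M(k) only if its unramified dimension lies below the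
  Iwahori dimension of k; this forces k'_\<bullet> < (k_\<bullet> + 1)(p + 1) + p. If k' < k then
  |k' - k| < k < p^2 k_\<bullet>; if k' > k then k' - k = (k'_\<bullet> - k_\<bullet>)(p - 1), whose p-adic
  valuation is that of k'_\<bullet> - k_\<bullet> < p^2 k_\<bullet>. Either way
  p^(v_p(k' - k)) < p^2 k_\<bullet> < p^(\<lfloor>log_p k_\<bullet>\<rfloor> + 3).\<close>

lemma resid_less: "2 \<le> p \<Longrightarrow> resid p m < p - 1"
  by (simp add: resid_def)

lemma keps_le: "2 \<le> p \<Longrightarrow> keps p a s \<le> p"
  using resid_less[of p "a + 2 * s"] by (simp add: keps_def)

lemma deltaeps_le_one:
  assumes "s \<le> p - 2"
  shows "deltaeps p a s \<le> 1"
proof (cases "p \<ge> 2")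
  case True
  have "s + resid p (a + s) < 2 * (p - 1)"
    using assms True resid_less[of p "a + s"] by simp
  then have "(s + resid p (a + s)) div (p - 1) < 2"
    by (simp add: less_mult_imp_div_less)
  then show ?thesis
    by (simp add: deltaeps_def)
qed (simp add: deltaeps_def)

lemma t1_le:
  assumes "2 \<le> p" "s \<le> p - 2"
  shows "t1 p a s \<le> p"
  using assms deltaeps_le_one[OF assms(2), of a] resid_less[of p "a + s"]
  by (auto simp: t1_def)

lemma kbul_of_mult_plus_keps: "2 \<le> p \<Longrightarrow> kbul p a s (kb * (p - 1) + keps p a s) = kb"
  by (simp add: kbul_def)

lemma mult_plus_keps_kbul:
  assumes "k mod (p - 1) = keps p a s mod (p - 1)" "keps p a s \<le> k"
  shows "kbul p a s k * (p - 1) + keps p a s = k"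
proof -
  have "(p - 1) dvd (k - keps p a s)"
    using assms by (simp add: mod_eq_dvd_iff_nat)
  then show ?thesis
    using assms(2) by (simp add: kbul_def)
qed

lemma dur_less_of_mn_nonzero: "mn p a s n k \<noteq> 0 \<Longrightarrow> dur p a s k < n"
  by (simp add: mn_def split: if_splits)

lemma qur_le_of_dur_less_dIw:
  "dur p a s k' < dIw p a s k \<Longrightarrow> qur p a s k' \<le> int (kbul p a s k)"
  by (simp add: dur_def dIw_def eta_def split: if_splits)

lemma kbul_less_of_qur_le:
  assumes "qur p a s k \<le> int b"
  shows "kbul p a s k < (b + 1) * (p + 1) + t1 p a s"
proof -
  have "(real (kbul p a s k) - real (t1 p a s)) / real (p + 1) < real b + 1"
    using assms unfolding qur_def by linarith
  then have "real (kbul p a s k) < real ((b + 1) * (p + 1) + t1 p a s)"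
    by (simp add: divide_less_eq algebra_simps)
  then show ?thesis
    by (simp only: of_nat_less_iff)
qed

lemma kbul_bound_of_mn_nonzero:
  assumes "2 \<le> p" "s \<le> p - 2"
    and "mn p a s n k' \<noteq> 0" "n \<le> dIw p a s (kb * (p - 1) + keps p a s)"
  shows "kbul p a s k' < (kb + 1) * (p + 1) + p"
proof -
  have "dur p a s k' < dIw p a s (kb * (p - 1) + keps p a s)"
    using dur_less_of_mn_nonzero[OF assms(3)] assms(4) by simp
  then have "qur p a s k' \<le> int kb"
    using qur_le_of_dur_less_dIw kbul_of_mult_plus_keps[OF assms(1)] by metis
  then show ?thesis
    using kbul_less_of_qur_le t1_le[OF assms(1,2)] by (meson add_le_mono order_less_le_trans order_refl)
qed

lemma power_multiplicity_le_abs: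
  fixes p x :: int
  assumes "0 \<le> p" "x \<noteq> 0"
  shows "p ^ multiplicity p x \<le> \<bar>x\<bar>"
  using dvd_imp_le_int[OF assms(2) multiplicity_dvd, of p] assms(1) by simp

lemma less_power_floor_log:
  fixes b x :: nat
  assumes "2 \<le> b" "1 \<le> x"
  shows "x < b ^ (nat \<lfloor>log b x\<rfloor> + 1)"
proof -
  have "\<lfloor>log b x\<rfloor> = int (nat \<lfloor>log b x\<rfloor>)"
    using assms by simp
  then show ?thesis
    using floor_log_nat_eq_powr_iff[of b x "nat \<lfloor>log b x\<rfloor>"] assms by simp
qed

lemma multiplicity_mult_pred:
  fixes p :: nat and x :: int
  assumes "prime p" "x \<noteq> 0"
  shows "multiplicity (int p) (x * int (p - 1)) = multiplicity (int p) x"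
proof -
  have "\<not> p dvd (p - 1)"
    using prime_gt_1_nat[OF assms(1)] by (auto dest: dvd_imp_le)
  then have "\<not> int p dvd int (p - 1)"
    by (metis of_nat_dvd_iff)
  then show ?thesis
    using assms prime_gt_1_nat[OF assms(1)]
    by (simp add: prime_elem_multiplicity_mult_distrib not_dvd_imp_multiplicity_0)
qed

lemma mult_pred_plus_less_square_mult:
  fixes p kb :: nat
  assumes "5 \<le> p" "1 \<le> kb"
  shows "kb * (p - 1) + p < p ^ 2 * kb"
proof -
  have "kb * (p - 1) \<le> p * kb" "p \<le> p * kb"
    using assms by simp_all
  then have "kb * (p - 1) + p \<le> 2 * (p * kb)"
    by linarith
  also have "\<dots> < p * (p * kb)"
    using assms by (intro mult_strict_right_mono) auto
  finally show ?thesis by (simp add: power2_eq_square mult.assoc)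
qed

lemma suc_mult_suc_plus_less_square_mult:
  fixes p kb :: nat
  assumes "5 \<le> p" "1 \<le> kb"
  shows "(kb + 1) * (p + 1) + p < p ^ 2 * kb + kb"
proof -
  have "4 * p \<le> 4 * (p * kb)"
    using assms by simp
  also have "4 * (p * kb) \<le> (p - 1) * (p * kb)"
    using assms by (intro mult_right_mono) auto
  moreover have "(p - 1) * (p * kb) + p * kb = p * (p * kb)"
    using assms by (cases p) auto
  ultimately have "4 * p + p * kb \<le> p * (p * kb)"
    by linarith
  then show ?thesis
    using assms by (simp add: algebra_simps power2_eq_square)
qed

lemma power_multiplicity_diff_less:
  fixes p a s kb k' :: nat
  defines "k \<equiv> kb * (p - 1) + keps p a s"
  assumes "prime p" "5 \<le> p" "1 \<le> kb" "k' \<noteq> k"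
    and "k' mod (p - 1) = keps p a s mod (p - 1)"
    and "kbul p a s k' < (kb + 1) * (p + 1) + p"
  shows "p ^ multiplicity (int p) (int k' - int k) < p ^ 2 * kb"
proof (cases "k' < k")
  case True
  have "int (p ^ multiplicity (int p) (int k' - int k)) \<le> int k - int k'"
    using power_multiplicity_le_abs[of "int p" "int k' - int k"] True by simp
  also have "\<dots> \<le> int (kb * (p - 1) + p)"
    using keps_le[of p a s] assms(3) unfolding k_def by simp
  finally have "p ^ multiplicity (int p) (int k' - int k) \<le> kb * (p - 1) + p"
    by (simp only: of_nat_le_iff)
  then show ?thesis
    using mult_pred_plus_less_square_mult[OF assms(3,4)] by linarith
next
  case False
  define kb' where "kb' = kbul p a s k'"
  have k'_eq: "k' = kb' * (p - 1) + keps p a s"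
    using mult_plus_keps_kbul[OF assms(6)] False assms(5) unfolding kb'_def k_def by simp
  then have "kb < kb'"
    using False assms(5) unfolding k_def by auto
  have "k' - k = (kb' - kb) * (p - 1)"
    unfolding k'_eq k_def by (simp add: diff_mult_distrib)
  then have "int k' - int k = int (kb' - kb) * int (p - 1)"
    using False by (simp add: of_nat_diff flip: of_nat_mult)
  then have "multiplicity (int p) (int k' - int k) = multiplicity (int p) (int (kb' - kb))"
    using multiplicity_mult_pred[OF assms(2)] \<open>kb < kb'\<close> by simp
  moreover have "int p ^ multiplicity (int p) (int (kb' - kb)) \<le> int (kb' - kb)"
    using power_multiplicity_le_abs[of "int p" "int (kb' - kb)"] \<open>kb < kb'\<close> by simp
  moreover have "kb' < p ^ 2 * kb + kb"
    using assms(7) suc_mult_suc_plus_less_square_mult[OF assms(3,4)] unfolding kb'_def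
    by (rule less_trans)
  then have "kb' - kb < p ^ 2 * kb"
    using \<open>kb < kb'\<close> by arith
  ultimately show ?thesis
    by simp
qed

theorem lemma3p9:
  fixes p a s kb :: nat
  assumes "prime p" and "p \<ge> 5" and "1 \<le> a" and "a \<le> p - 4" and "s \<le> p - 2"
    and "kb \<ge> 1"
  shows "MM p a s (kb * (p - 1) + keps p a s) \<le> enat (nat \<lfloor>log (real p) (real kb)\<rfloor> + 3)"
proof -
  define k where "k = kb * (p - 1) + keps p a s"
  define L where "L = nat \<lfloor>log (real p) (real kb)\<rfloor>"
  have "vw p k k' \<le> L + 3"
    if "k' \<noteq> k" "k' mod (p - 1) = keps p a s mod (p - 1)"
      and "n \<le> dIw p a s k" "mn p a s n k' \<noteq> 0" for k' n
  proof -
    have "kbul p a s k' < (kb + 1) * (p + 1) + p"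
      using kbul_bound_of_mn_nonzero[of p s a n k' kb] assms(2,5) that(3,4)
      unfolding k_def by simp
    then have "p ^ multiplicity (int p) (int k' - int k) < p ^ 2 * kb"
      using power_multiplicity_diff_less[of p kb k' a s] assms that(1,2) unfolding k_def
      by blast
    also have "\<dots> < p ^ 2 * p ^ (L + 1)"
      using less_power_floor_log[of p kb] assms unfolding L_def by simp
    also have "\<dots> = p ^ (L + 3)"
      by (simp add: power_add eval_nat_numeral)
    finally have "multiplicity (int p) (int k' - int k) < L + 3"
      using assms(2) by simp
    then show ?thesis
      by (simp add: vw_def)
  qed
  then show ?thesis
    unfolding MM_def k_def[symmetric] L_def[symmetric]
    by (intro Sup_least) auto
qed

end
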